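(* Let $\mathcal{C}$ be an $[n,k]_q$ MWS code satisfying property (A). Then $$n\ge\left\lceil\frac{q^{k+2}-3q+2}{4(q-1)}\right\rceil.$$
   Context: Fix a primitive element $\alpha$ of $\mathbb{F}_q$. An $[n,k]_q$ code is a $k$-dimensional subspace of $\mathbb{F}_q^n$ (non-degenerate if $k\ge 2$); it is MWS if it has exactly $\frac{q^k-1}{q-1}$ distinct non-zero Hamming weights. For $c\in\mathbb{F}_q^n$ and $\beta\in\mathbb{F}_q$, $c[\beta]=|\{l:c_l=\beta\}|$. Property (A): there exists $\beta\in\mathbb{F}_q^*$ such that for $a,b\in\mathcal{C}$, $a[\beta]=b[\beta]$ only if $a=b$. *)

theory Defs
  imports "HOL-Analysis.Analysis"
begin

text \<open>Linear codes over a finite field 'a (so q = CARD('a)); vectors are 'a^'n with n = CARD('n).\<close>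

definition hweight :: "'a::zero ^ 'n \<Rightarrow> nat" where
  "hweight c = card {i. c $ i \<noteq> 0}"

definition symcount :: "'a ^ 'n \<Rightarrow> 'a \<Rightarrow> nat" where
  "symcount c \<beta> = card {i. c $ i = \<beta>}"

definition linear_code :: "('a::field ^ 'n) set \<Rightarrow> nat \<Rightarrow> bool" where
  "linear_code C k \<longleftrightarrow> vec.subspace C \<and> vec.dim C = k"

definition nondegenerate :: "('a::zero ^ 'n) set \<Rightarrow> bool" where
  "nondegenerate C \<longleftrightarrow> (\<forall>i. \<exists>c\<in>C. c $ i \<noteq> 0)"

definition MWS :: "('a::{finite,field} ^ 'n) set \<Rightarrow> nat \<Rightarrow> bool" where
  "MWS C k \<longleftrightarrow> card {hweight c | c. c \<in> C \<and> c \<noteq> 0} = (CARD('a) ^ k - 1) div (CARD('a) - 1)"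

definition propertyA :: "('a::field ^ 'n) set \<Rightarrow> bool" where
  "propertyA C \<longleftrightarrow> (\<exists>\<beta>::'a. \<beta> \<noteq> 0 \<and>
      (\<forall>a\<in>C. \<forall>b\<in>C. symcount a \<beta> = symcount b \<beta> \<longrightarrow> a = b))"

end

theory Submission imports Defs begin

text \<open>Fix \<beta> as in property (A). The map c \<mapsto> c[\<beta>] is injective on C, so its N = card C values
are distinct naturals and sum to at least N(N-1)/2. Counting the other way, the codewords with
c_i = \<beta> inject, by translation with a multiple of one of them, into each of the q fibres of the
evaluation at coordinate i, so there are at most N/q of them and the sum is at most nN/q. Hence q(N-1) \<le> 2n, and since N \<ge> q^k this gives n \<ge> q(q^k-1)/2, which
dominates the claimed bound.\<close>

lemma card_power_dim_le_card_subspace: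
  fixes C :: "('a::{finite,field} ^ 'n) set"
  assumes "vec.subspace C"
  shows "CARD('a) ^ vec.dim C \<le> card C"
proof -
  obtain B where B: "B \<subseteq> C" "vec.independent B" "card B = vec.dim C"
    by (meson vec.basis_exists)
  define combine where "combine = (\<lambda>u::'a ^ 'n \<Rightarrow> 'a. \<Sum>v\<in>B. u v *s v)"
  have "inj_on combine (B \<rightarrow>\<^sub>E UNIV)"
  proof (rule inj_onI)
    fix u w assume u: "u \<in> B \<rightarrow>\<^sub>E UNIV" and w: "w \<in> B \<rightarrow>\<^sub>E UNIV" and eq: "combine u = combine w"
    have "(\<Sum>v\<in>B. (u v - w v) *s v) = combine u - combine w"
      unfolding combine_def by (simp add: sum_subtractf vec.scale_left_diff_distrib)
    with eq have "(\<Sum>v\<in>B. (u v - w v) *s v) = 0"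
      by simp
    then have "\<forall>v\<in>B. u v - w v = 0"
      using B(2) vec.dependent_finite[of B] by (auto dest: spec[of _ "\<lambda>v. u v - w v"])
    then show "u = w" using u w by (auto simp: PiE_def extensional_def fun_eq_iff)
  qed
  moreover have "combine ` (B \<rightarrow>\<^sub>E UNIV) \<subseteq> C"
  proof -
    have "combine u \<in> vec.span B" for u
      unfolding combine_def by (intro vec.span_sum vec.span_scale vec.span_base)
    then show ?thesis using vec.span_minimal[OF B(1) assms] by blast
  qed
  ultimately have "card (B \<rightarrow>\<^sub>E (UNIV::'a set)) \<le> card C"
    by (simp add: card_inj_on_le)
  then show ?thesis using B(3) by (simp add: card_PiE)
qed

lemma card_times_pred_card_le_double_sum:
  fixes T :: "nat set"
  assumes "finite T"
  shows "card T * (card T - 1) \<le> 2 * \<Sum>T"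
  using assms
proof (induction "card T" arbitrary: T)
  case 0
  then show ?case by simp
next
  case (Suc m)
  define M where "M = Max T"
  have "T \<noteq> {}" using Suc.hyps(2) by auto
  then have "M \<in> T" and "T \<subseteq> {0..M}"
    using Suc.prems by (auto simp: M_def)
  then have "card T \<le> Suc M"
    using card_mono[of "{0..M}" T] by simp
  have "card (T - {M}) = m"
    using Suc.hyps(2) \<open>M \<in> T\<close> by simp
  moreover have "\<Sum>T = M + \<Sum>(T - {M})"
    using Suc.prems \<open>M \<in> T\<close> by (simp add: sum.remove)
  moreover have "m * (m - 1) \<le> 2 * \<Sum>(T - {M})"
    using Suc.hyps(1)[of "T - {M}"] Suc.prems \<open>card (T - {M}) = m\<close> by simp
  ultimately show ?case
    using \<open>card T \<le> Suc M\<close> Suc.hyps(2)[symmetric] by (cases m) (auto simp: algebra_simps)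
qed

lemma card_coordinate_fibre_le:
  fixes C :: "('a::{finite,field} ^ 'n) set"
  assumes "vec.subspace C" and "\<beta> \<noteq> 0"
  shows "CARD('a) * card {c\<in>C. c $ i = \<beta>} \<le> card C"
proof (cases "\<exists>c0\<in>C. c0 $ i = \<beta>")
  case False
  then have "{c\<in>C. c $ i = \<beta>} = {}" by auto
  then show ?thesis by (metis card.empty mult_0_right zero_le)
next
  case True
  then obtain c0 where c0: "c0 \<in> C" "c0 $ i = \<beta>" by blast
  have fibre_le: "card {c\<in>C. c $ i = \<beta>} \<le> card {c\<in>C. c $ i = \<gamma>}" for \<gamma>
  proof (rule card_inj_on_le)
    let ?shift = "\<lambda>c. c + ((\<gamma> - \<beta>) / \<beta>) *s c0"
    show "inj_on ?shift {c\<in>C. c $ i = \<beta>}" by (simp add: inj_on_def)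
    show "?shift ` {c\<in>C. c $ i = \<beta>} \<subseteq> {c\<in>C. c $ i = \<gamma>}"
      using c0 assms by (auto intro!: vec.subspace_add vec.subspace_scale)
  qed simp
  have "CARD('a) * card {c\<in>C. c $ i = \<beta>} = (\<Sum>\<gamma>\<in>(UNIV::'a set). card {c\<in>C. c $ i = \<beta>})"
    by simp
  also have "\<dots> \<le> (\<Sum>\<gamma>\<in>UNIV. card {c\<in>C. c $ i = \<gamma>})"
    by (rule sum_mono) (rule fibre_le)
  also have "\<dots> = (\<Sum>\<gamma>\<in>UNIV. \<Sum>c\<in>{c\<in>C. c $ i = \<gamma>}. 1::nat)"
    by simp
  also have "\<dots> = card C"
    by (subst sum.group) auto
  finally show ?thesis .
qed

lemma sum_symcount_eq_sum_card_coordinate_fibres: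
  fixes C :: "('a ^ 'n::finite) set"
  assumes "finite C"
  shows "(\<Sum>c\<in>C. symcount c \<beta>) = (\<Sum>i\<in>UNIV. card {c\<in>C. c $ i = \<beta>})"
proof -
  have "(\<Sum>c\<in>C. symcount c \<beta>) = (\<Sum>c\<in>C. \<Sum>i\<in>UNIV. if c $ i = \<beta> then 1 else 0::nat)"
    by (simp add: symcount_def sum.If_cases)
  also have "\<dots> = (\<Sum>i\<in>UNIV. \<Sum>c\<in>C. if c $ i = \<beta> then 1 else 0::nat)"
    by (rule sum.swap)
  also have "\<dots> = (\<Sum>i\<in>UNIV. card {c\<in>C. c $ i = \<beta>})"
    using assms by (simp add: sum.If_cases Int_def)
  finally show ?thesis .
qed

lemma propertyA_card_code_le:
  fixes C :: "('a::{finite,field} ^ 'n) set"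
  assumes "vec.subspace C" and "propertyA C"
  shows "CARD('a) * (card C - 1) \<le> 2 * CARD('n)"
proof -
  obtain \<beta> :: 'a where "\<beta> \<noteq> 0" and inj: "inj_on (\<lambda>c. symcount c \<beta>) C"
    using assms(2) unfolding propertyA_def inj_on_def by blast
  define N where "N = card C"
  define S where "S = (\<Sum>c\<in>C. symcount c \<beta>)"
  have "N > 0"
    using vec.subspace_0[OF assms(1)] by (auto simp: N_def card_gt_0_iff)
  have "N * (N - 1) \<le> 2 * S"
    using card_times_pred_card_le_double_sum[of "(\<lambda>c. symcount c \<beta>) ` C"]
    by (simp add: N_def S_def card_image[OF inj] sum.reindex[OF inj])
  then have "CARD('a) * (N * (N - 1)) \<le> 2 * (CARD('a) * S)"
    by simp
  also have "CARD('a) * S = (\<Sum>i\<in>UNIV. CARD('a) * card {c\<in>C. c $ i = \<beta>})"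
    by (simp add: S_def sum_symcount_eq_sum_card_coordinate_fibres sum_distrib_left)
  also have "\<dots> \<le> CARD('n) * N"
    using sum_mono[OF card_coordinate_fibre_le[OF assms(1) \<open>\<beta> \<noteq> 0\<close>]]
    by (simp add: N_def)
  finally have "(CARD('a) * (N - 1)) * N \<le> (2 * CARD('n)) * N"
    by (simp add: algebra_simps)
  then show ?thesis using \<open>N > 0\<close> by (simp add: N_def)
qed

lemma length_bound_arith:
  fixes q Q n :: real
  assumes "q \<ge> 2" and "Q \<ge> q" and "q * (Q - 1) \<le> 2 * n"
  shows "(q^2 * Q - 3 * q + 2) / (4 * (q - 1)) \<le> n"
proof -
  have "q * q * (q - 2) \<le> q * Q * (q - 2)"
    using assms by (intro mult_right_mono mult_left_mono) auto
  moreover have "0 \<le> (q - 1) * (q - 1) * (q - 2)"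
    using assms by simp
  ultimately have "q^2 * Q - 3 * q + 2 \<le> 2 * (q - 1) * (q * (Q - 1))"
    by (simp add: power2_eq_square algebra_simps)
  also have "\<dots> \<le> 2 * (q - 1) * (2 * n)"
    using assms by (intro mult_left_mono) auto
  finally show ?thesis
    using assms by (simp add: pos_divide_le_eq algebra_simps)
qed

theorem mainTheorem11:
  fixes C :: "('a::{finite,field} ^ 'n) set" and k :: nat
  assumes "linear_code C k"
    and "k \<ge> 1"
    and "k \<ge> 2 \<longrightarrow> nondegenerate C"
    and "MWS C k"
    and "propertyA C"
  shows "int CARD('n) \<ge>
    \<lceil>(real CARD('a) ^ (k + 2) - 3 * real CARD('a) + 2) / (4 * (real CARD('a) - 1))\<rceil>"
proof -
  let ?q = "real CARD('a)"
  have sub: "vec.subspace C" and "vec.dim C = k"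
    using assms(1) by (auto simp: linear_code_def)
  have "card C \<ge> 1"
    using vec.subspace_0[OF sub] by (auto simp: Suc_le_eq card_gt_0_iff)
  have "real (CARD('a) * (card C - 1)) \<le> real (2 * CARD('n))"
    using propertyA_card_code_le[OF sub assms(5)] by (simp only: of_nat_le_iff)
  then have length_bound: "?q * (real (card C) - 1) \<le> 2 * real CARD('n)"
    using \<open>card C \<ge> 1\<close> by (simp add: of_nat_diff)
  have "?q ^ k \<le> real (card C)"
    using card_power_dim_le_card_subspace[OF sub] \<open>vec.dim C = k\<close>
    by (metis of_nat_le_iff of_nat_power)
  then have "?q * (?q ^ k - 1) \<le> 2 * real CARD('n)"
    using length_bound by (smt (verit) mult_left_mono of_nat_0_le_iff)
  moreover have "?q \<ge> 2"
    using card_mono[of "UNIV::'a set" "{0, 1}"] by simp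
  moreover have "?q \<le> ?q ^ k"
    using \<open>?q \<ge> 2\<close> assms(2) by (simp add: self_le_power)
  ultimately have "(?q^2 * ?q ^ k - 3 * ?q + 2) / (4 * (?q - 1)) \<le> real CARD('n)"
    by (intro length_bound_arith)
  then show ?thesis
    by (simp add: ceiling_le_iff power_add power2_eq_square algebra_simps)
qed

end
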